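(* Under the setting and assumptions described in the context (with $\sigma^2=s=1$, conditions A1' and C'', and $M=o(n^a)$ for some $a\in(0,1)$), writing $B_{*j}$ for the $j$-th column of $B_*$, $\Lambda_*=\mathrm{diag}(\lambda_{*1},\dots,\lambda_{*r})$, and $$\mathbf R_j=\sum_{1\le i\ne j\le r}\frac{1}{\lambda_{*i}-\lambda_{*j}}B_{*i}B_{*i}^T-\frac1{\lambda_{*j}}(I_M-B_*B_*^T),\qquad j=1,\dots,r,$$ we have $$H_B^{-1}(\theta_*;\theta_* )\big(\nabla_B\widetilde L_n(\theta_* )\big)=[\mathbf R_1\widetilde SB_{*1}:\cdots:\mathbf R_r\widetilde SB_{*r}].$$
   Context: Model: $Y_1,\dots,Y_n$ i.i.d. $N_m(0,\overline\Sigma)$ with $\overline\Sigma=\overline\Sigma_0+I_m$ ($\sigma^2=s=1$); $\overline\Sigma_0$ positive semidefinite with eigenvalues $\overline\lambda_1\ge\dots\ge\overline\lambda_m\ge0$; $r\ge1$ fixed. $\Phi$ known $M\times m$ with $\Phi\Phi^T=I_M$. $\mathcal S_{M,r}=\{B\in\mathbb R^{M\times r}:B^TB=I_r\}$. $\widetilde S=\frac1n\sum_i\Phi Y_iY_i^T\Phi^T$, $\Gamma(B,\Lambda)=B\Lambda B^T+I_M$, $\widetilde L_n(B,\Lambda)=\frac12\mathrm{tr}(\Gamma^{-1}\widetilde S)+\frac12\log|\Gamma|$. Condition A1': $\overline c_1\ge\overline\lambda_1>\dots>\overline\lambda_r>\overline\lambda_{r+1}$, $\max_{j\le r}(\overline\lambda_j-\overline\lambda_{j+1})^{-1}\le\overline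 c_2$. Condition C'': there is $(B_*,\Lambda_* )\in\mathcal S_{M,r}\times\mathbb R_+^r$ ($\Lambda_*$ diagonal) with $\|\overline\Sigma_0-\Phi^TB_*\Lambda_*B_*^T\Phi\|_F=O(\sqrt{M\log n/n})$. Let $\zeta=\log\Lambda$, $\theta_*=(B_*,\log\Lambda_* )$, $\Gamma_*=B_*\Lambda_*B_*^T+I_M$, $L(\theta;\theta_* )=\frac12\mathrm{tr}(\Gamma(\theta)^{-1}\Gamma_* )+\frac12\log|\Gamma(\theta)|$. Tangent space $\mathcal T_B=\{U:B^TU=-U^TB\}$ with canonical metric $\langle X,Y\rangle_c=\mathrm{tr}(X^T(I_M-\frac12BB^T)Y)$. For a smooth $f$ of $B$ with Euclidean gradient $f_B$ and Euclidean Hessian form $f_{BB}$: intrinsic gradient $\nabla_Bf=f_B-Bf_B^TB$; intrinsic Hessian $H(\Delta,X)=f_{BB}(\Delta,X)+\frac12\mathrm{tr}[(f_B^T\Delta B^T+B^T\Delta f_B^T)X]-\frac12\mathrm{tr}[(B^Tf_B+f_B^TB)\Delta^T(I_M-BB^T)X]$ for $\Delta,X\in\mathcal T_B$. $\nabla_B\widetilde L_n(\theta_* )$ is the intrinsic gradient of $B\mapsto\widetilde L_n(B,\Lambda_* )$ at $B_*$; $H_B(\theta_*;\theta_* )$ the intrinsic Hessian of $B\mapsto L((B,\log\Lambda_* );\theta_* )$ at $B_*$; $H_B^{-1}(\theta_*;\theta_* )(G)$ for $G\in\mathcal T_{B_*}$ is the $T\in\mathcal T_{B_*}$ with $H_B(\theta_*;\theta_*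 )(T,X)=\langle G,X\rangle_c$ for all $X\in\mathcal T_{B_*}$. *)

theory Defs
  imports "HOL-Analysis.Analysis"
begin

text \<open>Matrices are rendered as \<open>real^'c^'r\<close> (rows indexed by \<open>'r\<close>, columns by \<open>'c\<close>);
  the ambient dimension M is the finite type \<open>'M\<close>, the rank r the finite type \<open>'r\<close>,
  the data dimension m the finite type \<open>'m\<close>.  The inner product on \<open>real^'c^'r\<close>
  is the Frobenius inner product \<open>tr(X^T Y)\<close>.\<close>

definition diag_mat :: "real^'r \<Rightarrow> real^'r^'r" where
  "diag_mat v = (\<chi> i j. if i = j then v $ i else 0)"

definition stiefel :: "(real^'r^'M) set" where
  "stiefel = {B. transpose B ** B = mat 1}"

definition Gam :: "real^'r^'M \<Rightarrow> real^'r \<Rightarrow> real^'M^'M" where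
  "Gam B lam = B ** diag_mat lam ** transpose B + mat 1"

definition Stilde :: "nat \<Rightarrow> real^'m^'M \<Rightarrow> (nat \<Rightarrow> real^'m) \<Rightarrow> real^'M^'M" where
  "Stilde n Phi Y = (1 / real n) *\<^sub>R
     (\<Sum>i<n. (\<chi> a b. (Phi *v Y i) $ a * (Phi *v Y i) $ b))"

definition Ltilde :: "real^'M^'M \<Rightarrow> real^'r^'M \<Rightarrow> real^'r \<Rightarrow> real" where
  "Ltilde S B lam = 1/2 * trace (matrix_inv (Gam B lam) ** S) + 1/2 * ln (det (Gam B lam))"

definition Lpop :: "real^'M^'M \<Rightarrow> real^'r^'M \<Rightarrow> real^'r \<Rightarrow> real" where
  "Lpop Gs B lam = 1/2 * trace (matrix_inv (Gam B lam) ** Gs) + 1/2 * ln (det (Gam B lam))"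

definition egrad :: "(real^'r^'M \<Rightarrow> real) \<Rightarrow> real^'r^'M \<Rightarrow> real^'r^'M" where
  "egrad f B = (THE G. (f has_derivative (\<lambda>D. G \<bullet> D)) (at B))"

definition ehess :: "(real^'r^'M \<Rightarrow> real) \<Rightarrow> real^'r^'M \<Rightarrow> real^'r^'M \<Rightarrow> real^'r^'M \<Rightarrow> real" where
  "ehess f B Dl X = frechet_derivative (egrad f) (at B) Dl \<bullet> X"

definition tangent :: "real^'r^'M \<Rightarrow> (real^'r^'M) set" where
  "tangent B = {U. transpose B ** U = - (transpose U ** B)}"

definition canon :: "real^'r^'M \<Rightarrow> real^'r^'M \<Rightarrow> real^'r^'M \<Rightarrow> real" where
  "canon B X Y = trace (transpose X ** (mat 1 - (1/2) *\<^sub>R (B ** transpose B)) ** Y)"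

definition igrad :: "(real^'r^'M \<Rightarrow> real) \<Rightarrow> real^'r^'M \<Rightarrow> real^'r^'M" where
  "igrad f B = egrad f B - B ** transpose (egrad f B) ** B"

definition ihess :: "(real^'r^'M \<Rightarrow> real) \<Rightarrow> real^'r^'M \<Rightarrow> real^'r^'M \<Rightarrow> real^'r^'M \<Rightarrow> real" where
  "ihess f B Dl X =
     ehess f B Dl X
     + 1/2 * trace ((transpose (egrad f B) ** Dl ** transpose B
                      + transpose B ** Dl ** transpose (egrad f B)) ** X)
     - 1/2 * trace ((transpose B ** egrad f B + transpose (egrad f B) ** B)
                      ** transpose Dl ** (mat 1 - B ** transpose B) ** X)"

definition ihess_inv :: "(real^'r^'M \<Rightarrow> real) \<Rightarrow> real^'r^'M \<Rightarrow> real^'r^'M \<Rightarrow> real^'r^'M" where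
  "ihess_inv f B G = (THE T. T \<in> tangent B \<and> (\<forall>X \<in> tangent B. ihess f B T X = canon B G X))"

definition Rmat :: "real^'r^'M \<Rightarrow> real^'r \<Rightarrow> 'r \<Rightarrow> real^'M^'M" where
  "Rmat B lam j =
     (\<Sum>i\<in>UNIV - {j}. (1 / (lam $ i - lam $ j)) *\<^sub>R (\<chi> a b. B $ a $ i * B $ b $ i))
     - (1 / lam $ j) *\<^sub>R (mat 1 - B ** transpose B)"

end

theory Submission
  imports Defs
begin

text \<open>At \<open>B\<^sub>*\<close> the population criterion is stationary, so its intrinsic Hessian is just the
  derivative of its Euclidean gradient; with the Woodbury form of \<open>\<Gamma>\<^sup>-\<^sup>1\<close> this is the explicit map
  \<open>D \<mapsto> \<Gamma>\<^sup>-\<^sup>1 (D\<Lambda>B\<^sup>T + B\<Lambda>D\<^sup>T) \<Gamma>\<^sup>-\<^sup>1 B\<Lambda>\<close>.  Split a tangent vector as \<open>D = BA + E\<close> with \<open>A\<close> skew and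
  \<open>B\<^sup>T E = 0\<close>: the Hessian weights \<open>E\<close> columnwise by \<open>\<lambda>\<^sup>2/(1+\<lambda>)\<close> and, after symmetrising, \<open>A\<^sub>i\<^sub>j\<close> by a
  positive multiple of \<open>(\<lambda>\<^sub>i - \<lambda>\<^sub>j)\<^sup>2\<close>, so it is injective on the tangent space when the \<open>\<lambda>\<^sub>j\<close> are distinct.  Hence it
  suffices to check the candidate \<open>[R\<^sub>1 S B\<^sub>1 : \<dots> : R\<^sub>r S B\<^sub>r]\<close>: its residual against the gradient
  has no component orthogonal to \<open>B\<close>, and its \<open>B\<close>-component is symmetric, hence orthogonal to the
  skew \<open>B\<^sup>T X\<close> of every tangent \<open>X\<close>.\<close>

section \<open>Matrix algebra\<close>

lemma transpose_nth: "transpose A $ i $ j = A $ j $ i"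
  by (simp add: transpose_def)

lemma transpose_zero [simp]: "transpose (0 :: 'a::zero^'n^'m) = 0"
  by (simp add: transpose_def vec_eq_iff)

lemma transpose_add: "transpose (A + B) = transpose A + transpose (B :: 'a::ab_group_add^'n^'m)"
  by (simp add: transpose_def vec_eq_iff)

lemma transpose_diff: "transpose (A - B) = transpose A - transpose (B :: 'a::ab_group_add^'n^'m)"
  by (simp add: transpose_def vec_eq_iff)

lemma transpose_uminus: "transpose (- A) = - transpose (A :: 'a::ab_group_add^'n^'m)"
  by (simp add: transpose_def vec_eq_iff)

lemma matrix_add_rdistrib: "(A + B) ** C = A ** C + B ** (C :: 'a^'p^'n)"
  for A B :: "'a::semiring_1^'n^'m"
  by (simp add: matrix_matrix_mult_def vec_eq_iff sum.distrib distrib_right)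

lemma matrix_diff_rdistrib: "(A - B) ** C = A ** C - B ** (C :: 'a^'p^'n)"
  for A B :: "'a::ring_1^'n^'m"
  by (simp add: matrix_matrix_mult_def vec_eq_iff sum_subtractf left_diff_distrib)

lemma matrix_diff_ldistrib: "A ** (B - C) = A ** B - A ** (C :: 'a^'p^'n)"
  for A :: "'a::ring_1^'n^'m"
  by (simp add: matrix_matrix_mult_def vec_eq_iff sum_subtractf right_diff_distrib)

lemma matrix_uminus_left: "(- A) ** B = - (A ** (B :: 'a^'p^'n))"
  for A :: "'a::ring_1^'n^'m"
  by (simp add: matrix_matrix_mult_def vec_eq_iff sum_negf)

lemma matrix_uminus_right: "A ** (- B) = - (A ** (B :: 'a^'p^'n))"
  for A :: "'a::ring_1^'n^'m"
  by (simp add: matrix_matrix_mult_def vec_eq_iff sum_negf)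

lemma matrix_mul_zero_right [simp]: "A ** (0 :: 'a::semiring_1^'p^'n) = 0"
  by (simp add: matrix_matrix_mult_def vec_eq_iff)

lemma matrix_mult_eq_left: "A ** B = C \<Longrightarrow> X ** A ** B = X ** (C :: 'a::semiring_1^'p^'n)"
  by (simp flip: matrix_mul_assoc)

lemma matrix_mult_numeral_left: "(numeral k * A) ** B = numeral k * (A ** (B :: 'a^'p^'n))"
  for A :: "'a::comm_semiring_1^'n^'m"
  by (simp add: matrix_matrix_mult_def vec_eq_iff sum_distrib_left mult.assoc)

lemmas matrix_ring_simps = matrix_add_ldistrib matrix_add_rdistrib matrix_diff_ldistrib
  matrix_diff_rdistrib matrix_uminus_left matrix_uminus_right matrix_mul_assoc
  transpose_add transpose_diff transpose_uminus matrix_transpose_mul matrix_mult_numeral_left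

lemma sum_matrix_vector_mult: "sum f I *v (v :: real^'n) = (\<Sum>i\<in>I. f i *v v)"
  for f :: "'i \<Rightarrow> real^'n^'m"
  by (induct I rule: infinite_finite_induct) (simp_all add: matrix_vector_mult_add_rdistrib)

lemma matrix_vector_mult_column: "A *v column j C = column j (A ** C)"
  by (simp add: matrix_vector_mult_def matrix_matrix_mult_def column_def vec_eq_iff)

lemma trace_scaleR: "trace (c *\<^sub>R A) = c * trace (A :: real^'n^'n)"
  by (simp add: trace_def sum_distrib_left)

lemma trace_uminus: "trace (- A) = - trace (A :: 'a::comm_ring_1^'n^'n)"
  by (simp add: trace_def sum_negf)

lemma trace_transpose: "trace (transpose A) = trace (A :: 'a::comm_semiring_1^'n^'n)"
  by (simp add: trace_def transpose_def)

lemma inner_matrix_eq_trace: "(A :: real^'c^'r) \<bullet> B = trace (transpose A ** B)"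
  unfolding inner_vec_def trace_def transpose_def matrix_matrix_mult_def
  by simp (rule sum.swap)

lemma inner_matrix_mult_left: "(X ** Y) \<bullet> Z = Y \<bullet> (transpose X ** (Z :: real^'c^'r))"
  for X :: "real^'n^'r"
  by (simp add: inner_matrix_eq_trace matrix_transpose_mul matrix_mul_assoc)

lemma trace_symmetric_mult_skew:
  fixes S C :: "real^'n^'n"
  assumes "transpose S = S" and "transpose C = - C"
  shows "trace (S ** C) = 0"
proof -
  have "trace (S ** C) = trace (transpose (S ** C))" by (simp add: trace_transpose)
  also have "\<dots> = - trace (C ** S)"
    by (simp add: matrix_transpose_mul assms matrix_uminus_left trace_uminus)
  also have "\<dots> = - trace (S ** C)" by (simp only: trace_mul_sym[of C S])
  finally show ?thesis by simp
qed

lemma bounded_bilinear_matrix_mult: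
  "bounded_bilinear ((**) :: real^'n^'m \<Rightarrow> real^'p^'n \<Rightarrow> real^'p^'m)"
proof -
  have "bilinear ((**) :: real^'n^'m \<Rightarrow> real^'p^'n \<Rightarrow> real^'p^'m)"
    unfolding bilinear_def
    by (auto simp: linear_iff vec_eq_iff matrix_matrix_mult_def sum.distrib
        distrib_right distrib_left sum_distrib_left mult_ac)
  then show ?thesis by (rule bilinear_conv_bounded_bilinear[THEN iffD1])
qed

lemma bounded_linear_transpose: "bounded_linear (transpose :: real^'n^'m \<Rightarrow> real^'m^'n)"
  unfolding linear_conv_bounded_linear[symmetric]
  by (rule linearI) (simp_all add: transpose_add transpose_scalar)

lemma bounded_linear_trace: "bounded_linear (trace :: real^'n^'n \<Rightarrow> real)"
  unfolding linear_conv_bounded_linear[symmetric]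
  by (rule linearI) (simp_all add: trace_add trace_scaleR)

lemmas has_derivative_matrix_mult = bounded_bilinear.FDERIV[OF bounded_bilinear_matrix_mult]
lemmas has_derivative_transpose = bounded_linear.has_derivative[OF bounded_linear_transpose]
lemmas has_derivative_trace = bounded_linear.has_derivative[OF bounded_linear_trace]

lemma matrix_inv_unique:
  fixes A X :: "real^'n^'n"
  assumes "A ** X = mat 1"
  shows "matrix_inv A = X"
proof -
  have "\<exists>A'. A ** A' = mat 1 \<and> A' ** A = mat 1"
    using assms matrix_left_right_inverse by blast
  then have "matrix_inv A ** A = mat 1"
    unfolding matrix_inv_def by (rule someI_ex[THEN conjunct2])
  then have "matrix_inv A = matrix_inv A ** (A ** X)" by (simp add: matrix_mul_assoc assms)
  also have "\<dots> = X" by (simp add: matrix_mul_assoc \<open>matrix_inv A ** A = mat 1\<close>)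
  finally show ?thesis .
qed

section \<open>Derivatives of the matrix inverse and the determinant\<close>

lemma bounded_bilinear_has_derivative_vanishing:
  fixes u :: "'a::real_normed_vector \<Rightarrow> 'b::real_normed_vector"
    and v :: "'a \<Rightarrow> 'c::real_normed_vector" and prod :: "'b \<Rightarrow> 'c \<Rightarrow> 'd::real_normed_vector"
  assumes "bounded_bilinear prod"
    and u: "(u \<longlongrightarrow> u x) (at x)"
    and v: "(v has_derivative v') (at x)" and v0: "v x = 0"
  shows "((\<lambda>y. prod (u y) (v y)) has_derivative (\<lambda>h. prod (u x) (v' h))) (at x)"
proof -
  interpret bounded_bilinear prod by fact
  obtain KV where norm_v': "\<And>h. norm (v' h) \<le> norm h * KV"
    using bounded_linear.bounded[OF has_derivative_bounded_linear[OF v]] by fast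
  obtain K where K: "0 < K" and norm_prod: "\<And>a b. norm (prod a b) \<le> norm a * norm b * K"
    using pos_bounded by fast
  define Nv where "Nv = (\<lambda>y. norm (v y - v x - v' (y - x)) / norm (y - x))"
  let ?H = "\<lambda>y. norm (u y) * Nv y * K + norm (u y - u x) * KV * K"
  show ?thesis
  proof (rule has_derivativeI_sandwich[of 1 _ _ _ _ ?H])
    show "bounded_linear (\<lambda>h. prod (u x) (v' h))"
      by (intro bounded_linear_compose[OF bounded_linear_right] has_derivative_bounded_linear[OF v])
  next
    have "(Nv \<longlongrightarrow> 0) (at x)"
      using v by (simp add: has_derivative_iff_norm Nv_def)
    moreover have "((\<lambda>y. u y - u x) \<longlongrightarrow> 0) (at x)" using u by (simp add: LIM_zero)
    ultimately have "(?H \<longlongrightarrow> norm (u x) * 0 * K + norm (0::'b) * KV * K) (at x)"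
      using u by (intro tendsto_intros)
    then show "(?H \<longlongrightarrow> 0) (at x)" by simp
  next
    fix y assume "y \<noteq> x"
    have split: "prod (u y) (v y) - prod (u x) (v x) - prod (u x) (v' (y - x))
        = prod (u y) (v y - v x - v' (y - x)) + prod (u y - u x) (v' (y - x))"
      using v0 by (simp add: diff_left diff_right add_left add_right zero_right)
    have "norm (prod (u y) (v y) - prod (u x) (v x) - prod (u x) (v' (y - x)))
        \<le> norm (u y) * norm (v y - v x - v' (y - x)) * K + norm (u y - u x) * (norm (y - x) * KV) * K"
      unfolding split
      by (intro order_trans[OF norm_triangle_ineq add_mono] norm_prod order_trans[OF norm_prod]
          mult_right_mono mult_left_mono norm_v') (use K in auto)
    with \<open>y \<noteq> x\<close> show "norm (prod (u y) (v y) - prod (u x) (v x) - prod (u x) (v' (y - x))) / norm (y - x)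
        \<le> ?H y"
      by (simp add: Nv_def field_simps)
  qed simp_all
qed

text \<open>The uniform bound on \<open>G\<close> gives continuity of the inverse; the derivative then comes from
  \<open>G y - G x = G y ** (F x - F y) ** G x\<close>.\<close>

lemma has_derivative_matrix_inverse:
  fixes F G :: "'a::real_normed_vector \<Rightarrow> real^'n^'n"
  assumes F: "(F has_derivative F') (at x)"
    and right_inv: "\<And>y. F y ** G y = mat 1" and left_inv: "\<And>y. G y ** F y = mat 1"
    and bounded: "\<And>y. norm (G y) \<le> C"
  shows "(G has_derivative (\<lambda>h. - (G x ** F' h ** G x))) (at x)"
proof -
  interpret mm: bounded_bilinear "(**) :: real^'n^'n \<Rightarrow> real^'n^'n \<Rightarrow> real^'n^'n"
    by (rule bounded_bilinear_matrix_mult)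
  obtain K where K: "0 < K"
    and norm_mult: "\<And>(a :: real^'n^'n) (b :: real^'n^'n). norm (a ** b) \<le> norm a * norm b * K"
    using mm.pos_bounded by fast
  define v where "v y = (F x - F y) ** G x" for y
  have G_diff: "G y - G x = G y ** v y" for y
  proof -
    have "G y ** v y = G y ** (F x ** G x) - (G y ** F y) ** G x"
      by (simp add: v_def matrix_diff_rdistrib matrix_diff_ldistrib matrix_mul_assoc)
    then show ?thesis by (simp add: right_inv left_inv)
  qed
  have v: "(v has_derivative (\<lambda>h. (0 - F' h) ** G x)) (at x)"
    unfolding v_def
    by (rule bounded_linear.has_derivative[OF mm.bounded_linear_left
          has_derivative_diff[OF has_derivative_const F]])
  have "(v \<longlongrightarrow> v x) (at x)"
    using has_derivative_continuous[OF v] by (simp add: isCont_def)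
  then have v_lim: "(v \<longlongrightarrow> 0) (at x)" by (simp add: v_def)
  have "((\<lambda>y. G y - G x) \<longlongrightarrow> 0) (at x)"
  proof (rule Lim_null_comparison)
    show "\<forall>\<^sub>F y in at x. norm (G y - G x) \<le> C * norm (v y) * K"
      unfolding G_diff
      by (intro always_eventually allI order_trans[OF norm_mult] mult_right_mono
          mult_left_mono bounded) (use K in auto)
    show "((\<lambda>y. C * norm (v y) * K) \<longlongrightarrow> 0) (at x)"
      using tendsto_mult_right_zero[OF tendsto_mult_left_zero[OF tendsto_norm_zero[OF v_lim]],
          of C K]
      by (simp add: mult.assoc)
  qed
  then have G_cont: "(G \<longlongrightarrow> G x) (at x)" by (simp add: LIM_zero_iff)
  have "((\<lambda>y. G x + G y ** v y) has_derivative (\<lambda>h. 0 + G x ** ((0 - F' h) ** G x))) (at x)"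
    by (intro has_derivative_add has_derivative_const
        bounded_bilinear_has_derivative_vanishing[OF bounded_bilinear_matrix_mult G_cont v])
      (simp add: v_def)
  moreover have "(\<lambda>y. G x + G y ** v y) = G"
    using G_diff by (auto simp: fun_eq_iff algebra_simps)
  ultimately show ?thesis
    by (simp add: matrix_uminus_left matrix_uminus_right matrix_mul_assoc)
qed

lemma has_derivative_matrix_entry: "((\<lambda>A :: real^'n^'m. A $ i $ j) has_derivative (\<lambda>H. H $ i $ j)) F"
  using bounded_linear_compose[OF bounded_linear_vec_nth[of j] bounded_linear_vec_nth[of i]]
  by (rule bounded_linear.has_derivative[OF _ has_derivative_ident])

lemma prod_mat_one_permutation_remove:
  fixes p :: "'n::finite \<Rightarrow> 'n"
  assumes p: "p permutes UNIV" and "p \<noteq> id"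
  shows "(\<Prod>j\<in>UNIV - {i}. (mat 1 :: real^'n^'n) $ j $ p j) = 0"
proof -
  obtain k where k: "p k \<noteq> k" using \<open>p \<noteq> id\<close> by (auto simp: fun_eq_iff)
  have "inj p" using p permutes_inj by blast
  obtain j where j: "j \<noteq> i" "p j \<noteq> j"
  proof (cases "k = i")
    case True
    have "p (p k) \<noteq> p k" using k \<open>inj p\<close> by (metis injD)
    with k True that show ?thesis by auto
  next
    case False
    with that k show ?thesis by blast
  qed
  then show ?thesis
    by (intro prod_zero) (auto simp: mat_def intro!: bexI[of _ j])
qed

text \<open>In the Leibniz expansion only the identity permutation contributes a linear term at \<open>I\<close>.\<close>

lemma has_derivative_det_at_one: "(det has_derivative trace) (at (mat 1 :: real^'n^'n))"
proof -
  let ?P = "{p. p permutes (UNIV :: 'n set)}"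
  let ?d = "\<lambda>H :: real^'n^'n. \<Sum>p\<in>?P. of_int (sign p) *
    (\<Sum>i\<in>UNIV. H $ i $ p i * (\<Prod>j\<in>UNIV - {i}. (mat 1 :: real^'n^'n) $ j $ p j))"
  have "((\<lambda>A::real^'n^'n. \<Sum>p\<in>?P. of_int (sign p) * (\<Prod>i\<in>UNIV. A $ i $ p i)) has_derivative ?d)
      (at (mat 1))"
    by (intro has_derivative_sum has_derivative_mult_right has_derivative_prod
        has_derivative_matrix_entry)
  moreover have "?d H = trace H" for H
  proof -
    have "?d H = (\<Sum>p\<in>{id}. of_int (sign p) *
        (\<Sum>i\<in>UNIV. H $ i $ p i * (\<Prod>j\<in>UNIV - {i}. (mat 1 :: real^'n^'n) $ j $ p j)))"
      by (intro sum.mono_neutral_right)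
        (auto simp: finite_permutations prod_mat_one_permutation_remove)
    then show ?thesis by (simp add: trace_def mat_def)
  qed
  ultimately show ?thesis by (simp add: det_def[abs_def])
qed

lemma has_derivative_det:
  fixes A N :: "real^'n^'n"
  assumes right_inv: "A ** N = mat 1" and left_inv: "N ** A = mat 1"
  shows "(det has_derivative (\<lambda>H. det A * trace (N ** H))) (at A)"
proof -
  have mult_N: "((**) N has_derivative (**) N) (at A)"
    by (rule bounded_linear.has_derivative[OF bounded_bilinear.bounded_linear_right
          [OF bounded_bilinear_matrix_mult] has_derivative_ident])
  have "((\<lambda>X. det A * det (N ** X)) has_derivative (\<lambda>H. det A * trace (N ** H))) (at A)"
    using diff_chain_at[OF mult_N, of det trace] has_derivative_det_at_one left_inv
    by (intro has_derivative_mult_right) (simp add: o_def)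
  moreover have "det A * det (N ** X) = det X" for X
    by (simp flip: det_mul add: matrix_mul_assoc right_inv)
  ultimately show ?thesis by simp
qed

section \<open>The covariance model and the likelihood\<close>

lemma transpose_diag_mat [simp]: "transpose (diag_mat v) = diag_mat v"
  by (simp add: transpose_def diag_mat_def vec_eq_iff)

lemma diag_mat_mult_vec: "diag_mat v *v z = v * z"
  unfolding diag_mat_def matrix_vector_mult_def vec_eq_iff
  by (simp add: if_distrib[where f="\<lambda>a. a * _"] cong: if_cong)

lemma diag_mat_mult_left: "(diag_mat v ** A) $ i $ j = v $ i * A $ i $ j"
  by (simp add: diag_mat_def matrix_matrix_mult_def if_distrib[where f="\<lambda>x. x * _"] cong: if_cong)

lemma diag_mat_mult_right: "(A ** diag_mat v) $ i $ j = A $ i $ j * v $ j"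
  by (simp add: diag_mat_def matrix_matrix_mult_def if_distrib[where f="\<lambda>x. _ * x"] cong: if_cong)

lemma diag_mat_mult: "diag_mat v ** diag_mat w = diag_mat (v * w)"
  by (simp add: vec_eq_iff diag_mat_mult_right) (simp add: diag_mat_def)

lemma diag_mat_one: "diag_mat 1 = mat 1"
  by (simp add: mat_def diag_mat_def vec_eq_iff)

lemma diag_mat_diff: "diag_mat v - diag_mat w = diag_mat (v - w)"
  by (simp add: diag_mat_def vec_eq_iff)

lemma inner_Gam_mult_ge:
  assumes "\<forall>i. lam $ i \<ge> 0"
  shows "x \<bullet> x \<le> x \<bullet> (Gam B lam *v x)"
proof -
  let ?z = "transpose B *v x"
  have "x \<bullet> ((B ** diag_mat lam ** transpose B) *v x) = ?z \<bullet> (diag_mat lam *v ?z)"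
    by (simp add: matrix_vector_mul_assoc[symmetric] dot_lmul_matrix[symmetric])
  also have "\<dots> = (\<Sum>i\<in>UNIV. lam $ i * (?z $ i)\<^sup>2)"
    by (simp add: diag_mat_mult_vec inner_vec_def power2_eq_square mult_ac)
  also have "\<dots> \<ge> 0" using assms by (intro sum_nonneg) simp
  finally show ?thesis
    by (simp add: Gam_def matrix_vector_mult_add_rdistrib inner_add_right)
qed

lemma norm_le_norm_Gam_mult:
  assumes "\<forall>i. lam $ i \<ge> 0"
  shows "norm x \<le> norm (Gam B lam *v x)"
proof -
  have "norm x * norm x \<le> x \<bullet> (Gam B lam *v x)"
    using inner_Gam_mult_ge[OF assms] by (simp add: norm_eq_sqrt_inner)
  also have "\<dots> \<le> norm x * norm (Gam B lam *v x)" by (rule norm_cauchy_schwarz)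
  finally show ?thesis
    by (cases "x = 0") (auto simp: mult_le_cancel_left)
qed

lemma transpose_Gam: "transpose (Gam B lam) = Gam B lam"
  by (simp add: Gam_def transpose_add matrix_transpose_mul matrix_mul_assoc)

lemma
  assumes "\<forall>i. lam $ i \<ge> 0"
  shows Gam_mult_matrix_inv: "Gam B lam ** matrix_inv (Gam B lam) = mat 1"
    and matrix_inv_mult_Gam: "matrix_inv (Gam B lam) ** Gam B lam = mat 1"
proof -
  have "x = 0" if "Gam B lam *v x = 0" for x
    using norm_le_norm_Gam_mult[OF assms, of x B] that by simp
  then obtain Y where left: "Y ** Gam B lam = mat 1"
    using matrix_left_invertible_ker by blast
  then have right: "Gam B lam ** Y = mat 1" using matrix_left_right_inverse by blast
  then have "matrix_inv (Gam B lam) = Y" by (rule matrix_inv_unique)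
  with left right show "Gam B lam ** matrix_inv (Gam B lam) = mat 1"
    "matrix_inv (Gam B lam) ** Gam B lam = mat 1" by auto
qed

lemma transpose_matrix_inv_Gam:
  assumes "\<forall>i. lam $ i \<ge> 0"
  shows "transpose (matrix_inv (Gam B lam)) = matrix_inv (Gam B lam)"
  using arg_cong[OF matrix_inv_mult_Gam[OF assms, of B], of transpose]
  by (intro matrix_inv_unique[symmetric]) (simp add: matrix_transpose_mul transpose_Gam)

lemma norm_matrix_inv_Gam_le:
  fixes B :: "real^'r^'M"
  assumes "\<forall>i. lam $ i \<ge> 0"
  shows "norm (matrix_inv (Gam B lam)) \<le> real CARD('M)"
proof -
  let ?N = "matrix_inv (Gam B lam)"
  have "norm (?N $ i) \<le> 1" for i
  proof -
    have "?N $ k $ i = ?N $ i $ k" for k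
      using arg_cong[OF transpose_matrix_inv_Gam[OF assms, of B], of "\<lambda>A. A $ i $ k"]
      by (simp add: transpose_def)
    then have "norm (?N $ i) = norm (?N *v axis i 1)"
      by (simp add: matrix_vector_mult_basis column_def vec_eq_iff)
    also have "\<dots> \<le> norm (Gam B lam *v (?N *v axis i 1))"
      by (rule norm_le_norm_Gam_mult[OF assms])
    also have "\<dots> = 1"
      by (simp add: matrix_vector_mul_assoc Gam_mult_matrix_inv[OF assms])
    finally show ?thesis .
  qed
  then have "(\<Sum>i\<in>UNIV. norm (?N $ i)) \<le> (\<Sum>i\<in>(UNIV::'M set). 1)" by (intro sum_mono)
  moreover have "norm ?N \<le> (\<Sum>i\<in>UNIV. norm (?N $ i))"
    unfolding norm_vec_def by (rule L2_set_le_sum) simp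
  ultimately show ?thesis by simp
qed

definition dGam :: "real^'r^'M \<Rightarrow> real^'r \<Rightarrow> real^'r^'M \<Rightarrow> real^'M^'M" where
  "dGam B lam D = D ** diag_mat lam ** transpose B + B ** diag_mat lam ** transpose D"

lemma has_derivative_Gam: "((\<lambda>B. Gam B lam) has_derivative dGam B lam) (at B within s)"
proof -
  have "((\<lambda>B. B ** diag_mat lam ** transpose B + mat 1) has_derivative
     (\<lambda>h. (B ** diag_mat lam) ** transpose h + (B ** 0 + h ** diag_mat lam) ** transpose B + 0))
     (at B within s)"
    by (intro has_derivative_add has_derivative_matrix_mult has_derivative_transpose
        has_derivative_ident has_derivative_const)
  then show ?thesis by (simp add: Gam_def[abs_def] dGam_def[abs_def] add.commute)
qed

lemma has_derivative_matrix_inv_Gam: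
  fixes B :: "real^'r^'M"
  assumes "\<forall>i. lam $ i \<ge> 0"
  shows "((\<lambda>B. matrix_inv (Gam B lam)) has_derivative
     (\<lambda>D. - (matrix_inv (Gam B lam) ** dGam B lam D ** matrix_inv (Gam B lam)))) (at B)"
  by (rule has_derivative_matrix_inverse[OF has_derivative_Gam Gam_mult_matrix_inv[OF assms]
        matrix_inv_mult_Gam[OF assms] norm_matrix_inv_Gam_le[OF assms]])

lemma has_derivative_det_Gam:
  fixes B :: "real^'r^'M"
  assumes "\<forall>i. lam $ i \<ge> 0"
  shows "((\<lambda>B. det (Gam B lam)) has_derivative
     (\<lambda>D. det (Gam B lam) * trace (matrix_inv (Gam B lam) ** dGam B lam D))) (at B)"
  using diff_chain_at[OF has_derivative_Gam
      has_derivative_det[OF Gam_mult_matrix_inv[OF assms] matrix_inv_mult_Gam[OF assms]]]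
  by (simp add: o_def)

text \<open>\<open>det (Gam (t *\<^sub>R B) lam)\<close> is continuous in \<open>t\<close>, never zero, and equals \<open>1\<close> at \<open>t = 0\<close>.\<close>

lemma det_Gam_pos:
  fixes B :: "real^'r^'M"
  assumes "\<forall>i. lam $ i \<ge> 0"
  shows "det (Gam B lam) > 0"
proof (rule ccontr)
  assume "\<not> det (Gam B lam) > 0"
  define h where "h t = det (Gam (t *\<^sub>R B) lam)" for t :: real
  have "h t \<noteq> 0" for t
    using arg_cong[OF Gam_mult_matrix_inv[OF assms, of "t *\<^sub>R B"], of det]
    by (auto simp: h_def det_mul)
  moreover have "isCont h t" for t
  proof -
    have "((\<lambda>t::real. t *\<^sub>R B) has_derivative (\<lambda>s. s *\<^sub>R B)) (at t)"
      by (intro derivative_eq_intros) auto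
    from has_derivative_continuous[OF diff_chain_at[OF this has_derivative_det_Gam[OF assms]]]
    show ?thesis by (simp add: h_def[abs_def] o_def)
  qed
  moreover have "h 0 = 1" "h 1 \<le> 0"
    using \<open>\<not> det (Gam B lam) > 0\<close> by (simp_all add: h_def Gam_def)
  ultimately show False
    using IVT2[of h 1 0 0] by force
qed

definition grad_Ltilde :: "real^'M^'M \<Rightarrow> real^'r \<Rightarrow> real^'r^'M \<Rightarrow> real^'r^'M" where
  "grad_Ltilde S lam B = matrix_inv (Gam B lam) ** B ** diag_mat lam
     - matrix_inv (Gam B lam) ** S ** matrix_inv (Gam B lam) ** B ** diag_mat lam"

lemma trace_symmetric_mult_dGam:
  assumes "transpose C = C"
  shows "trace (C ** dGam B lam D) = 2 * ((C ** B ** diag_mat lam) \<bullet> D)"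
proof -
  let ?L = "diag_mat lam"
  have CBL: "transpose (C ** B ** ?L) = ?L ** transpose B ** C"
    by (simp add: matrix_transpose_mul assms matrix_mul_assoc)
  have "trace (C ** (D ** ?L ** transpose B)) = trace ((?L ** transpose B) ** (C ** D))"
    using trace_mul_sym[of "C ** D" "?L ** transpose B"] by (simp add: matrix_mul_assoc)
  moreover have "trace (C ** (B ** ?L ** transpose D)) = trace ((?L ** transpose B ** C) ** D)"
    using trace_transpose[of "C ** (B ** ?L ** transpose D)"] trace_mul_sym[of D "?L ** transpose B ** C"]
    by (simp add: matrix_transpose_mul assms matrix_mul_assoc)
  ultimately show ?thesis
    by (simp add: dGam_def matrix_add_ldistrib trace_add inner_matrix_eq_trace CBL matrix_mul_assoc)
qed

lemma Ltilde_has_derivative: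
  fixes B :: "real^'r^'M"
  assumes lam: "\<forall>i. lam $ i \<ge> 0" and S: "transpose S = S"
  shows "((\<lambda>B. Ltilde S B lam) has_derivative (\<lambda>D. grad_Ltilde S lam B \<bullet> D)) (at B)"
proof -
  let ?N = "matrix_inv (Gam B lam)"
  let ?d = "det (Gam B lam)"
  have N: "transpose ?N = ?N" by (rule transpose_matrix_inv_Gam[OF lam])
  have "((\<lambda>B. Ltilde S B lam) has_derivative
      (\<lambda>D. 1/2 * trace (?N ** 0 + (- (?N ** dGam B lam D ** ?N)) ** S)
         + 1/2 * (?d * trace (?N ** dGam B lam D) * inverse ?d))) (at B)"
    unfolding Ltilde_def
    by (intro has_derivative_add has_derivative_mult_right has_derivative_trace
        has_derivative_matrix_mult has_derivative_matrix_inv_Gam[OF lam] has_derivative_const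
        has_derivative_ln det_Gam_pos[OF lam] has_derivative_det_Gam[OF lam])
  moreover have "1/2 * trace (?N ** 0 + (- (?N ** dGam B lam D ** ?N)) ** S)
         + 1/2 * (?d * trace (?N ** dGam B lam D) * inverse ?d) = grad_Ltilde S lam B \<bullet> D" for D
  proof -
    have "trace (?N ** dGam B lam D ** ?N ** S) = trace ((?N ** S ** ?N) ** dGam B lam D)"
      using trace_mul_sym[of "?N ** dGam B lam D" "?N ** S"] by (simp add: matrix_mul_assoc)
    also have "\<dots> = 2 * ((?N ** S ** ?N ** B ** diag_mat lam) \<bullet> D)"
      by (rule trace_symmetric_mult_dGam) (simp add: matrix_transpose_mul N S matrix_mul_assoc)
    finally show ?thesis
      using det_Gam_pos[OF lam, of B]
      by (simp add: grad_Ltilde_def inner_diff_left matrix_uminus_left trace_uminus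
          trace_symmetric_mult_dGam[OF N] matrix_mul_assoc)
  qed
  ultimately show ?thesis by simp
qed

lemma egrad_eqI:
  assumes "(f has_derivative (\<lambda>D. G \<bullet> D)) (at B)"
  shows "egrad f B = G"
  unfolding egrad_def
proof (rule the_equality)
  fix G' assume "(f has_derivative (\<lambda>D. G' \<bullet> D)) (at B)"
  then have "(\<lambda>D. G' \<bullet> D) = (\<lambda>D. G \<bullet> D)" using assms has_derivative_unique by blast
  then have "(G' - G) \<bullet> (G' - G) = 0" by (metis inner_diff_left diff_self)
  then show "G' = G" by simp
qed (fact assms)

lemma egrad_Ltilde:
  assumes "\<forall>i. lam $ i \<ge> 0" and "transpose S = S"
  shows "egrad (\<lambda>B. Ltilde S B lam) = grad_Ltilde S lam"
  using egrad_eqI[OF Ltilde_has_derivative[OF assms]] by (simp add: fun_eq_iff)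

lemma has_derivative_grad_Ltilde_at_Gam:
  fixes B :: "real^'r^'M"
  assumes lam: "\<forall>i. lam $ i \<ge> 0"
  shows "(grad_Ltilde (Gam B lam) lam has_derivative
     (\<lambda>D. matrix_inv (Gam B lam) ** dGam B lam D ** matrix_inv (Gam B lam) ** B ** diag_mat lam))
     (at B)"
proof -
  let ?N = "matrix_inv (Gam B lam)"
  let ?G = "Gam B lam"
  have NG: "X ** ?N ** ?G = X" and GN: "X ** ?G ** ?N = X" for X :: "real^'M^'M"
    by (simp_all flip: matrix_mul_assoc add: Gam_mult_matrix_inv[OF lam] matrix_inv_mult_Gam[OF lam])
  show ?thesis
    unfolding grad_Ltilde_def[abs_def]
    by (rule has_derivative_eq_rhs, (rule has_derivative_diff has_derivative_matrix_mult
          has_derivative_matrix_inv_Gam[OF lam] has_derivative_ident has_derivative_const)+)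
      (simp add: fun_eq_iff matrix_ring_simps NG GN Gam_mult_matrix_inv[OF lam]
        matrix_inv_mult_Gam[OF lam])
qed

section \<open>The Hessian at the population point\<close>

lemma sum_sum_nonneg_eq_0_iff:
  fixes f :: "'a::finite \<Rightarrow> 'b::finite \<Rightarrow> real"
  assumes "\<And>i j. 0 \<le> f i j"
  shows "(\<Sum>i\<in>UNIV. \<Sum>j\<in>UNIV. f i j) = 0 \<longleftrightarrow> (\<forall>i j. f i j = 0)"
  using assms by (simp add: sum_nonneg_eq_0_iff sum_nonneg)

lemma weighted_self_inner_eq_zero:
  fixes E :: "real^'c^'r"
  assumes "\<forall>j. w $ j > 0" and "(E ** diag_mat w) \<bullet> E = 0"
  shows "E = 0"
proof -
  have "(\<Sum>a\<in>UNIV. \<Sum>j\<in>UNIV. w $ j * (E $ a $ j)\<^sup>2) = 0"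
    using assms(2) by (simp add: inner_vec_def diag_mat_mult_right power2_eq_square mult_ac)
  then have "w $ j * (E $ a $ j)\<^sup>2 = 0" for a j
    by (subst (asm) sum_sum_nonneg_eq_0_iff) (use assms(1) in \<open>auto simp: less_imp_le\<close>)
  then show ?thesis
    using assms(1) by (simp add: vec_eq_iff less_imp_neq[symmetric])
qed

text \<open>Symmetrising \<open>i \<leftrightarrow> j\<close> turns the weight \<open>lam j (lam j - lam i)\<close> into \<open>(lam j - lam i)\<^sup>2 / 2\<close>.\<close>

lemma skew_commutator_inner_eq_zero:
  fixes A :: "real^'r^'r"
  assumes skew: "transpose A = - A"
    and k: "\<forall>i. k $ i > 0"
    and distinct: "\<forall>i j. i \<noteq> j \<longrightarrow> lam $ i \<noteq> lam $ j"
    and zero: "(diag_mat k ** (A ** diag_mat lam - diag_mat lam ** A) ** diag_mat k ** diag_mat lam)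
      \<bullet> A = 0"
  shows "A = 0"
proof -
  have A_swap: "A $ j $ i = - A $ i $ j" for i j
    using arg_cong[OF skew, of "\<lambda>M. M $ i $ j"] by (simp add: transpose_def)
  define f where "f i j = k $ i * k $ j * lam $ j * (lam $ j - lam $ i) * (A $ i $ j)\<^sup>2" for i j
  have "(\<Sum>i\<in>UNIV. \<Sum>j\<in>UNIV. f i j) = 0"
    using zero
    by (simp add: f_def inner_vec_def diag_mat_mult_left diag_mat_mult_right matrix_diff_rdistrib
        matrix_diff_ldistrib power2_eq_square algebra_simps)
  moreover have "(\<Sum>i\<in>UNIV. \<Sum>j\<in>UNIV. f j i) = (\<Sum>i\<in>UNIV. \<Sum>j\<in>UNIV. f i j)"
    by (rule sum.swap)
  ultimately have "(\<Sum>i\<in>UNIV. \<Sum>j\<in>UNIV. f i j + f j i) = 0"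
    by (simp add: sum.distrib)
  moreover have fsym: "f i j + f j i = k $ i * k $ j * (lam $ j - lam $ i)\<^sup>2 * (A $ i $ j)\<^sup>2" for i j
    using A_swap[of i j] by (simp add: f_def power2_eq_square algebra_simps)
  ultimately have terms: "k $ i * k $ j * (lam $ j - lam $ i)\<^sup>2 * (A $ i $ j)\<^sup>2 = 0" for i j
    by (subst (asm) sum_sum_nonneg_eq_0_iff) (use k in \<open>auto simp: fsym less_imp_le\<close>)
  have "A $ i $ j = 0" for i j
    using terms[of i j] k distinct[rule_format, of j i] A_swap[of i i]
    by (cases "i = j") (auto simp: less_imp_neq[symmetric])
  then show ?thesis by (simp add: vec_eq_iff)
qed

locale stiefel_spikes =
  fixes B :: "real^'r^'M" and lam :: "real^'r"
  assumes orthonormal: "transpose B ** B = mat 1"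
    and lam_pos: "\<forall>i. lam $ i > 0"
    and lam_distinct: "\<forall>i j. i \<noteq> j \<longrightarrow> lam $ i \<noteq> lam $ j"
begin

definition "Lam = diag_mat lam"
definition "Lam_inv = diag_mat (\<chi> i. 1 / lam $ i)"
definition "kap = (\<chi> i. 1 / (1 + lam $ i))"
definition "K = diag_mat kap"

text \<open>Woodbury: \<open>(B Lam B\<^sup>T + I)\<^sup>-\<^sup>1 = I - B Lam K B\<^sup>T\<close> with \<open>K = (I + Lam)\<^sup>-\<^sup>1\<close>, since \<open>B\<^sup>T B = I\<close>.\<close>
definition "Ginv = mat 1 - B ** Lam ** K ** transpose B"

definition "P = mat 1 - B ** transpose B"

lemma lam_nonneg: "\<forall>i. lam $ i \<ge> 0"
  using lam_pos by (simp add: less_imp_le)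

lemma one_plus_lam_pos: "1 + lam $ i > 0"
  using lam_pos by (simp add: add_pos_pos)

lemma Lam_inv_Lam: "Lam_inv ** Lam = mat 1"
proof -
  have "(\<chi> i. 1 / lam $ i) * lam = 1"
    using lam_pos by (simp add: vec_eq_iff less_imp_neq[symmetric])
  then show ?thesis
    by (simp add: Lam_def Lam_inv_def diag_mat_mult flip: diag_mat_one)
qed

lemma one_minus_Lam_K: "mat 1 - Lam ** K = K"
proof -
  have "1 - lam * kap = kap"
    using one_plus_lam_pos by (simp add: kap_def vec_eq_iff field_simps less_imp_neq[symmetric])
  then show ?thesis
    by (simp add: Lam_def K_def diag_mat_mult diag_mat_diff flip: diag_mat_one)
qed

lemma Lam_minus_Lam_Lam_K: "Lam - Lam ** Lam ** K - Lam ** K = 0"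
proof -
  have "x - x * x * (1 / (1 + x)) - x * (1 / (1 + x)) = 0" if "1 + x > 0" for x :: real
    using that by (simp add: field_simps)
  then have "lam - lam * lam * kap - lam * kap = 0"
    using one_plus_lam_pos by (simp add: kap_def vec_eq_iff)
  then show ?thesis
    by (simp add: Lam_def K_def diag_mat_mult diag_mat_diff)
qed

lemma Lam_K_comm: "Lam ** K = K ** Lam"
  by (simp add: Lam_def K_def diag_mat_mult mult.commute)

lemma transpose_Lam [simp]: "transpose Lam = Lam"
  and transpose_K [simp]: "transpose K = K"
  and transpose_Lam_inv [simp]: "transpose Lam_inv = Lam_inv"
  by (simp_all add: Lam_def K_def Lam_inv_def)

lemma Gam_mult_Ginv: "Gam B lam ** Ginv = mat 1"
proof -
  have "Gam B lam ** Ginv = mat 1 + B ** (Lam - Lam ** Lam ** K - Lam ** K) ** transpose B"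
    by (simp add: Gam_def Ginv_def Lam_def matrix_ring_simps orthonormal[THEN matrix_mult_eq_left])
  then show ?thesis by (simp add: Lam_minus_Lam_Lam_K)
qed

lemma matrix_inv_Gam: "matrix_inv (Gam B lam) = Ginv"
  by (rule matrix_inv_unique[OF Gam_mult_Ginv])

lemma transpose_Ginv [simp]: "transpose Ginv = Ginv"
  by (simp add: Ginv_def matrix_ring_simps) (simp flip: matrix_mul_assoc add: Lam_K_comm)

lemma transpose_P [simp]: "transpose P = P"
  by (simp add: P_def matrix_ring_simps)

lemma Ginv_B: "Ginv ** B = B ** K"
proof -
  have "Ginv ** B = B ** (mat 1 - Lam ** K)"
    by (simp add: Ginv_def matrix_ring_simps orthonormal[THEN matrix_mult_eq_left])
  then show ?thesis by (simp add: one_minus_Lam_K)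
qed

lemma Bt_Ginv: "transpose B ** Ginv = K ** transpose B"
  using arg_cong[OF Ginv_B, of transpose] by (simp add: matrix_transpose_mul)

lemma P_B: "P ** B = 0"
  by (simp add: P_def matrix_ring_simps orthonormal[THEN matrix_mult_eq_left])

lemma Bt_P: "transpose B ** P = 0"
  by (simp add: P_def matrix_ring_simps orthonormal)

lemma P_P: "P ** P = P"
  by (simp add: P_def matrix_ring_simps orthonormal[THEN matrix_mult_eq_left])

lemma P_Ginv: "P ** Ginv = P"
  by (simp add: Ginv_def matrix_ring_simps P_B)

lemma P_plus_B_Bt: "B ** transpose B + P = mat 1"
  by (simp add: P_def)

lemmas stiefel_rules = orthonormal Ginv_B Bt_Ginv P_B Bt_P P_P P_Ginv Lam_inv_Lam
lemmas stiefel_simps = stiefel_rules stiefel_rules[THEN matrix_mult_eq_left]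

definition "hess D = Ginv ** dGam B lam D ** Ginv ** B ** Lam"

lemma hess_eq:
  "hess D = Ginv ** D ** Lam ** K ** Lam + B ** K ** Lam ** transpose D ** B ** K ** Lam"
  by (simp add: hess_def dGam_def flip: Lam_def) (simp add: matrix_ring_simps stiefel_simps)

lemma Bt_hess: "transpose B ** hess D
    = K ** (transpose B ** D) ** Lam ** K ** Lam + K ** Lam ** (transpose D ** B) ** K ** Lam"
  by (simp add: hess_eq matrix_ring_simps stiefel_simps)

lemma P_hess: "P ** hess D = P ** D ** Lam ** K ** Lam"
  by (simp add: hess_eq matrix_ring_simps stiefel_simps)

lemma hess_diff: "hess (D - D') = hess D - hess D'"
  by (simp add: hess_eq matrix_ring_simps)

lemma ihess_Ltilde_Gam: "ihess (\<lambda>B'. Ltilde (Gam B lam) B' lam) B D X = hess D \<bullet> X"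
proof -
  have egrad: "egrad (\<lambda>B'. Ltilde (Gam B lam) B' lam) = grad_Ltilde (Gam B lam) lam"
    by (rule egrad_Ltilde[OF lam_nonneg transpose_Gam])
  txt \<open>The gradient vanishes at \<open>B\<close>, so only the Euclidean Hessian survives in \<open>ihess\<close>.\<close>
  have "grad_Ltilde (Gam B lam) lam B = 0"
    by (simp add: grad_Ltilde_def matrix_mul_assoc matrix_inv_mult_Gam[OF lam_nonneg])
  moreover have "frechet_derivative (grad_Ltilde (Gam B lam) lam) (at B) D = hess D"
    by (simp add: frechet_derivative_at[OF has_derivative_grad_Ltilde_at_Gam[OF lam_nonneg], symmetric]
        hess_def matrix_inv_Gam Lam_def)
  ultimately show ?thesis
    by (simp add: ihess_def ehess_def egrad trace_def)
qed

lemma P_mult_in_tangent: "P ** D \<in> tangent B"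
  by (simp add: tangent_def matrix_transpose_mul matrix_mul_assoc stiefel_simps)

lemma Bt_mult_tangent_skew:
  "X \<in> tangent B \<Longrightarrow> transpose (transpose B ** X) = - (transpose B ** X)"
  by (simp add: tangent_def matrix_transpose_mul transpose_uminus)

lemma tangent_diff: "T \<in> tangent B \<Longrightarrow> T' \<in> tangent B \<Longrightarrow> T - T' \<in> tangent B"
  by (simp add: tangent_def matrix_ring_simps)

lemma P_mult_eq_zero_if_hess_orthogonal:
  assumes "\<forall>X \<in> tangent B. hess D \<bullet> X = 0"
  shows "P ** D = 0"
proof (rule weighted_self_inner_eq_zero)
  let ?w = "lam * lam * kap"
  show "\<forall>j. ?w $ j > 0" using lam_pos one_plus_lam_pos by (simp add: kap_def)
  have "0 = hess D \<bullet> (P ** D)" using assms P_mult_in_tangent by simp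
  also have "\<dots> = D \<bullet> (P ** hess D)"
    by (simp only: inner_commute[of "hess D"] inner_matrix_mult_left[of P] transpose_P)
  also have "\<dots> = (P ** (P ** D ** Lam ** K ** Lam)) \<bullet> D"
    by (simp add: P_hess inner_commute[of D] matrix_mul_assoc P_P)
  also have "\<dots> = (P ** D ** Lam ** K ** Lam) \<bullet> (P ** D)"
    by (simp only: inner_matrix_mult_left[of P] transpose_P)
  also have "P ** D ** Lam ** K ** Lam = P ** D ** diag_mat ?w"
    by (simp add: Lam_def K_def diag_mat_mult mult_ac flip: matrix_mul_assoc)
  finally show "(P ** D ** diag_mat ?w) \<bullet> (P ** D) = 0" by simp
qed

lemma hess_injective_on_tangent:
  assumes D: "D \<in> tangent B" and orth: "\<forall>X \<in> tangent B. hess D \<bullet> X = 0"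
  shows "D = 0"
proof -
  define A where "A = transpose B ** D"
  have "D = (B ** transpose B + P) ** D" by (simp add: P_plus_B_Bt)
  then have D_eq: "D = B ** A"
    by (simp add: matrix_add_rdistrib P_mult_eq_zero_if_hess_orthogonal[OF orth] A_def
        matrix_mul_assoc)
  have A_skew: "transpose A = - A"
    unfolding A_def by (rule Bt_mult_tangent_skew[OF D])
  have "transpose D ** B = - A"
    using A_skew by (simp add: A_def matrix_transpose_mul)
  then have Bt_hess_D: "transpose B ** hess D = K ** (A ** Lam - Lam ** A) ** K ** Lam"
    unfolding Bt_hess A_def[symmetric] by (simp add: matrix_ring_simps)
  have "0 = hess D \<bullet> (B ** A)" using orth D D_eq by simp
  also have "\<dots> = (transpose B ** hess D) \<bullet> A"
    by (simp only: inner_commute[of "hess D"] inner_matrix_mult_left[of B]) (rule inner_commute)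
  finally show ?thesis
    unfolding Bt_hess_D
    using skew_commutator_inner_eq_zero[OF A_skew, of kap lam]
      lam_distinct one_plus_lam_pos D_eq
    by (simp add: K_def Lam_def kap_def)
qed

end

section \<open>The Newton direction\<close>

locale stiefel_spikes_data = stiefel_spikes B lam for B :: "real^'r^'M" and lam +
  fixes S :: "real^'M^'M"
  assumes S_symmetric: "transpose S = S"
begin

definition "W = transpose B ** S ** B"

definition "Omega = (\<chi> i j. if i = j then 0 else W $ i $ j / (lam $ i - lam $ j))"

definition "newton_dir = B ** Omega - P ** S ** B ** Lam_inv"

definition "grad_S = grad_Ltilde S lam B"

definition "rgrad = grad_S - B ** transpose grad_S ** B"

definition "Qcan = mat 1 - (1/2) *\<^sub>R (B ** transpose B)"

definition "residual = hess newton_dir - Qcan ** rgrad"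

lemma transpose_W: "transpose W = W"
  by (simp add: W_def matrix_transpose_mul S_symmetric matrix_mul_assoc)

lemma W_swap: "W $ j $ i = W $ i $ j"
  using arg_cong[OF transpose_W, of "\<lambda>M. M $ i $ j"] by (simp add: transpose_def)

lemma transpose_Omega: "transpose Omega = - Omega"
proof -
  have "transpose Omega $ i $ j = (- Omega) $ i $ j" for i j
  proof (cases "i = j")
    case False
    then have "lam $ i - lam $ j \<noteq> 0" "lam $ j - lam $ i \<noteq> 0"
      using lam_distinct by auto
    with False show ?thesis by (simp add: transpose_def Omega_def W_swap[of j i] field_simps)
  qed (simp add: transpose_def Omega_def)
  then show ?thesis by (simp add: vec_eq_iff)
qed

lemma Bt_newton_dir: "transpose B ** newton_dir = Omega"
  by (simp add: newton_dir_def matrix_ring_simps stiefel_simps)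

lemma P_newton_dir: "P ** newton_dir = - (P ** S ** B ** Lam_inv)"
  by (simp add: newton_dir_def matrix_ring_simps stiefel_simps)

lemma newton_dir_in_tangent: "newton_dir \<in> tangent B"
proof -
  have "transpose newton_dir ** B = - Omega"
    using arg_cong[OF Bt_newton_dir, of transpose] by (simp add: transpose_Omega matrix_transpose_mul)
  then show ?thesis by (simp add: tangent_def Bt_newton_dir)
qed

lemma grad_S_eq: "grad_S = B ** K ** Lam - Ginv ** S ** B ** K ** Lam"
  by (simp add: grad_S_def grad_Ltilde_def matrix_inv_Gam matrix_mul_assoc stiefel_simps flip: Lam_def)

lemma Bt_grad_S: "transpose B ** grad_S = K ** Lam - K ** W ** K ** Lam"
  by (simp add: grad_S_eq W_def matrix_ring_simps stiefel_simps)

lemma transpose_grad_S_B: "transpose grad_S ** B = Lam ** K - Lam ** K ** W ** K"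
  using arg_cong[OF Bt_grad_S, of transpose] transpose_K transpose_Lam
  by (simp add: W_def matrix_ring_simps S_symmetric)

lemma P_grad_S: "P ** grad_S = - (P ** S ** B ** K ** Lam)"
  by (simp add: grad_S_eq matrix_ring_simps stiefel_simps)

lemma igrad_Ltilde: "igrad (\<lambda>B. Ltilde S B lam) B = rgrad"
  by (simp add: igrad_def egrad_Ltilde[OF lam_nonneg S_symmetric] rgrad_def flip: grad_S_def)

lemma transpose_Qcan: "transpose Qcan = Qcan"
  by (simp add: Qcan_def transpose_diff transpose_scalar matrix_transpose_mul)

lemma canon_eq_inner: "canon B G X = (Qcan ** G) \<bullet> X"
  by (simp add: canon_def inner_matrix_eq_trace matrix_transpose_mul transpose_diff
      transpose_scalar matrix_mul_assoc flip: Qcan_def) (simp add: transpose_Qcan)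

lemma P_residual: "P ** residual = 0"
proof -
  have "P ** Qcan = P"
    by (simp add: Qcan_def matrix_diff_ldistrib matrix_scalar_ac matrix_mul_assoc stiefel_simps
        flip: scalar_matrix_assoc)
  then have "P ** residual = P ** newton_dir ** Lam ** K ** Lam - P ** grad_S"
    by (simp add: residual_def rgrad_def P_hess matrix_ring_simps stiefel_simps)
  then show ?thesis
    by (simp add: P_newton_dir P_grad_S matrix_ring_simps stiefel_simps)
qed

lemma Bt_residual: "transpose B ** residual = K ** (Omega ** Lam - Lam ** Omega) ** K ** Lam
    - (1/2) *\<^sub>R (K ** Lam - K ** W ** K ** Lam - (Lam ** K - Lam ** K ** W ** K))"
proof -
  have "transpose B ** Qcan = (1/2) *\<^sub>R transpose B"
    by (simp add: Qcan_def matrix_diff_ldistrib matrix_scalar_ac matrix_mul_assoc orthonormal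
        flip: scalar_matrix_assoc)
  then have "transpose B ** (Qcan ** rgrad) = (1/2) *\<^sub>R (transpose B ** grad_S - transpose grad_S ** B)"
    by (simp add: rgrad_def matrix_mul_assoc matrix_diff_ldistrib orthonormal scaleR_diff_right
        flip: scalar_matrix_assoc)
  moreover have "transpose newton_dir ** B = - Omega"
    using arg_cong[OF Bt_newton_dir, of transpose] by (simp add: transpose_Omega matrix_transpose_mul)
  ultimately show ?thesis
    by (simp add: residual_def matrix_diff_ldistrib Bt_hess Bt_newton_dir Bt_grad_S transpose_grad_S_B)
      (simp add: matrix_ring_simps)
qed

lemma Bt_residual_entry: "(transpose B ** residual) $ i $ j
    = (if i = j then 0 else - (lam $ i + lam $ j) / 2 * kap $ i * kap $ j * W $ i $ j)"
proof (cases "i = j")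
  case True
  then show ?thesis
    by (simp add: Bt_residual K_def Lam_def Omega_def diag_mat_mult diag_mat_mult_left
        diag_mat_mult_right matrix_diff_ldistrib matrix_diff_rdistrib)
      (simp add: diag_mat_def algebra_simps)
next
  case False
  then have "W $ i $ j = Omega $ i $ j * (lam $ i - lam $ j)"
    using lam_distinct by (simp add: Omega_def)
  with False show ?thesis
    by (simp add: Bt_residual K_def Lam_def diag_mat_mult diag_mat_mult_left
        diag_mat_mult_right matrix_diff_ldistrib matrix_diff_rdistrib)
      (simp add: diag_mat_def field_simps)
qed

lemma transpose_Bt_residual: "transpose (transpose B ** residual) = transpose B ** residual"
  by (simp only: vec_eq_iff transpose_nth Bt_residual_entry) (simp add: W_swap mult_ac add.commute)

lemma residual_orthogonal_tangent:
  assumes "X \<in> tangent B"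
  shows "residual \<bullet> X = 0"
proof -
  have "residual = (B ** transpose B + P) ** residual" by (simp add: P_plus_B_Bt)
  then have "residual = B ** (transpose B ** residual)"
    by (simp add: matrix_add_rdistrib P_residual matrix_mul_assoc)
  then have "residual \<bullet> X = trace (transpose (transpose B ** residual) ** (transpose B ** X))"
    by (metis inner_matrix_mult_left inner_matrix_eq_trace)
  also have "\<dots> = 0"
    unfolding transpose_Bt_residual
    by (rule trace_symmetric_mult_skew[OF transpose_Bt_residual Bt_mult_tangent_skew[OF assms]])
  finally show ?thesis .
qed

lemma hess_newton_dir: "X \<in> tangent B \<Longrightarrow> hess newton_dir \<bullet> X = canon B rgrad X"
  using residual_orthogonal_tangent by (simp add: residual_def canon_eq_inner inner_diff_left)

lemma ihess_inv_eq_newton_dir: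
  "ihess_inv (\<lambda>B'. Ltilde (Gam B lam) B' lam) B (igrad (\<lambda>B'. Ltilde S B' lam) B) = newton_dir"
  unfolding ihess_inv_def igrad_Ltilde ihess_Ltilde_Gam
proof (rule the_equality)
  show "newton_dir \<in> tangent B \<and> (\<forall>X \<in> tangent B. hess newton_dir \<bullet> X = canon B rgrad X)"
    using newton_dir_in_tangent hess_newton_dir by blast
next
  fix T assume T: "T \<in> tangent B \<and> (\<forall>X \<in> tangent B. hess T \<bullet> X = canon B rgrad X)"
  then have "\<forall>X \<in> tangent B. hess (T - newton_dir) \<bullet> X = 0"
    using hess_newton_dir by (simp add: hess_diff inner_diff_left)
  then have "T - newton_dir = 0"
    using hess_injective_on_tangent tangent_diff T newton_dir_in_tangent by blast
  then show "T = newton_dir" by simp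
qed

lemma Rmat_columns_eq_newton_dir: "(\<chi> a j. (Rmat B lam j *v (S *v column j B)) $ a) = newton_dir"
proof -
  have "(Rmat B lam j *v (S *v column j B)) $ a = newton_dir $ a $ j" for a j
  proof -
    have W_entry: "W $ i $ j = (\<Sum>b\<in>UNIV. B $ b $ i * (S ** B) $ b $ j)" for i
      by (simp add: W_def matrix_matrix_mult_def[of "transpose B" "S ** B"] matrix_mul_assoc
          transpose_nth flip: matrix_mul_assoc)
    have P_col: "P *v column j (S ** B) = column j (P ** S ** B)"
      by (simp add: matrix_vector_mult_column matrix_mul_assoc)
    have "(Rmat B lam j *v (S *v column j B)) $ a
        = (\<Sum>i\<in>UNIV - {j}. 1 / (lam $ i - lam $ j) * (\<Sum>b\<in>UNIV. B $ a $ i * B $ b $ i * (S ** B) $ b $ j))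
          - 1 / lam $ j * (P ** S ** B) $ a $ j"
      unfolding Rmat_def P_def[symmetric] matrix_vector_mult_column[of S]
      by (simp add: matrix_vector_mult_diff_rdistrib sum_matrix_vector_mult
          scaleR_matrix_vector_assoc[symmetric] P_col sum_component)
        (simp add: matrix_vector_mult_def column_def mult.assoc)
    also have "\<dots> = (\<Sum>i\<in>UNIV - {j}. B $ a $ i * (W $ i $ j / (lam $ i - lam $ j)))
        - (P ** S ** B) $ a $ j * (1 / lam $ j)"
      by (simp add: W_entry sum_distrib_left sum_divide_distrib mult_ac)
    also have "(\<Sum>i\<in>UNIV - {j}. B $ a $ i * (W $ i $ j / (lam $ i - lam $ j))) = (B ** Omega) $ a $ j"
      by (simp add: matrix_matrix_mult_def Omega_def sum.remove[of UNIV j] if_distrib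
          cong: if_cong)
    finally show ?thesis
      by (simp add: newton_dir_def Lam_inv_def diag_mat_mult_right)
  qed
  then show ?thesis by (simp add: vec_eq_iff)
qed

end

theorem corollary3:
  fixes Bs :: "real^'r^'M" and lams :: "real^'r"
    and Phi :: "real^'m^'M" and Y :: "nat \<Rightarrow> real^'m" and n :: nat
  assumes "Phi ** transpose Phi = mat 1"
    and "n \<ge> 1"
    and "Bs \<in> stiefel"
    and "\<forall>i. lams $ i > 0"
    and "\<forall>i j. i \<noteq> j \<longrightarrow> lams $ i \<noteq> lams $ j"
  shows "ihess_inv (\<lambda>B. Lpop (Gam Bs lams) B lams) Bs
           (igrad (\<lambda>B. Ltilde (Stilde n Phi Y) B lams) Bs)
         = (\<chi> a j. (Rmat Bs lams j *v (Stilde n Phi Y *v column j Bs)) $ a)"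
proof -
  have "transpose (Stilde n Phi Y) = Stilde n Phi Y"
    by (simp add: Stilde_def transpose_def vec_eq_iff sum_component mult.commute)
  with assms(3-5) interpret stiefel_spikes_data Bs lams "Stilde n Phi Y"
    by unfold_locales (simp_all add: stiefel_def)
  have "(\<lambda>B. Lpop (Gam Bs lams) B lams) = (\<lambda>B. Ltilde (Gam Bs lams) B lams)"
    by (simp add: Lpop_def Ltilde_def)
  then show ?thesis by (simp add: ihess_inv_eq_newton_dir Rmat_columns_eq_newton_dir)
qed

end
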